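(* For every $\epsilon>0$ and $\delta\in(0,1)$, the minimax complexity of the stochastic global oracle for the finite-sum problem $\min_{\mathbf{w}\in\mathbb{R}^d}F(\mathbf{w})=\frac1n\sum_{i=1}^n f_i(\mathbf{w})$ over the class $\Sigma$ of all such finite sums (with arbitrary, not necessarily convex or smooth, individual functions, $F$ bounded below) satisfies $$\mathfrak{M}_{\Sigma,\mathsf{S}_f}(\epsilon,\delta)\le 2n^2\log(2n/\delta).$$
   Context: The stochastic global oracle $\mathsf{S}_f$, on each call, returns the entire function $f_i$ (a complete specification of it), for an index $i\sim\mathrm{Unif}([n])$ drawn independently at each call, without revealing $i$; computational cost other than the number of oracle calls is disregarded. For a function class $\mathcal F$ and oracle $\mathsf O$, let $\mathcal A(\mathsf O,k)$ be the class of algorithms issuing at most $k$ $\mathsf O$-queries, and $\mathbf{w}_{A(f)}$ the output of $A$ on $f$. Then $\mathfrak{M}_{\mathcal F,\mathsf O}(\epsilon,\delta)=\inf\{k\in\mathbb{N}:\exists A\in\mathcal A(\mathsf O,k)\text{ with }\sup_{f\in\mathcal F}\mathbb{P}(f(\mathbf{w}_{A(f)})-f^*>\epsilon)<\delta\}$, where $f^*$ is the infimum of $f$. *)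

theory Defs
  imports "HOL-Probability.Probability" "HOL-Library.FuncSet"
begin

definition finite_sum_obj ::
  "nat \<Rightarrow> (nat \<Rightarrow> (real ^ 'd) \<Rightarrow> real) \<Rightarrow> (real ^ 'd) \<Rightarrow> real"
  where "finite_sum_obj n fs w = (1 / real n) * (\<Sum>i<n. fs i w)"

definition Sigma_class :: "nat \<Rightarrow> (nat \<Rightarrow> (real ^ 'd) \<Rightarrow> real) set"
  where "Sigma_class n = {fs. fs \<in> {..<n} \<rightarrow>\<^sub>E UNIV \<and> bdd_below (range (finite_sum_obj n fs))}"

fun iid_list :: "nat \<Rightarrow> 'a pmf \<Rightarrow> 'a list pmf" where
  "iid_list 0 p = return_pmf []"
| "iid_list (Suc k) p = bind_pmf p (\<lambda>x. map_pmf (Cons x) (iid_list k p))"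

text \<open>Stochastic global oracle S_f, queried k times: returns the list of k functions
  fs i_1, ..., fs i_k with i_j iid uniform on {..<n} (indices not revealed).\<close>
definition oracle_answers :: "nat \<Rightarrow> (nat \<Rightarrow> 'b) \<Rightarrow> nat \<Rightarrow> 'b list pmf"
  where "oracle_answers n fs k = map_pmf (map fs) (iid_list k (pmf_of_set {..<n}))"

text \<open>An algorithm issuing at most k S_f-queries: since the oracle takes no input and
  computational cost is disregarded, it is (w.l.o.g. issuing exactly k queries) a possibly
  randomized map from the k oracle answers to an output point.\<close>
type_synonym 'd algorithm = "((real ^ ('d::finite)) \<Rightarrow> real) list \<Rightarrow> (real ^ 'd) pmf"

definition output_dist :: "nat \<Rightarrow> nat \<Rightarrow> 'd algorithm \<Rightarrow> (nat \<Rightarrow> (real ^ 'd) \<Rightarrow> real) \<Rightarrow> (real ^ 'd) pmf"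
  where "output_dist n k A fs = bind_pmf (oracle_answers n fs k) A"

definition fail_prob :: "nat \<Rightarrow> nat \<Rightarrow> 'd algorithm \<Rightarrow> real \<Rightarrow> (nat \<Rightarrow> (real ^ 'd) \<Rightarrow> real) \<Rightarrow> real"
  where "fail_prob n k A \<epsilon> fs =
    measure_pmf.prob (output_dist n k A fs)
      {w. finite_sum_obj n fs w - (INF v. finite_sum_obj n fs v) > \<epsilon>}"

text \<open>Minimax complexity M_{Sigma,S_f}(eps, delta) (infimum of the empty set = infinity).\<close>
definition minimax_complexity :: "('d::finite) itself \<Rightarrow> nat \<Rightarrow> real \<Rightarrow> real \<Rightarrow> ereal"
  where "minimax_complexity _ n \<epsilon> \<delta> =
    Inf {ereal (real k) | k. \<exists>A :: 'd algorithm.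
            (SUP fs \<in> (Sigma_class n :: (nat \<Rightarrow> (real ^ 'd) \<Rightarrow> real) set). fail_prob n k A \<epsilon> fs) < \<delta>}"

end

theory Submission
  imports Defs
begin

(* Draw k = floor (2 n^2 ln (2n/delta)) components. A function g occurring m times among
   f_1, ..., f_n is returned about k m / n times, and by Hoeffding's inequality its count deviates
   from this mean by k/(2n) or more with probability at most exp (-k/(2n^2)) per tail. Outside
   these events, rounding n * count / k recovers every multiplicity, so F itself is
   reconstructed exactly and an eps-minimiser of it can be output. If the n components are
   pairwise distinct, observing each of them once already identifies F, so upper tails are
   needed only when there are at most n - 1 distinct components; the union bound then gives a
   failure probability of at most (2n - 1) exp (-k/(2n^2)) < delta. *)

lemma iid_list_eq_replicate_pmf: "iid_list k p = replicate_pmf k p"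
  by (induction k) (simp_all add: map_pmf_def bind_assoc_pmf bind_return_pmf)

lemma map_pmf_map_replicate_pmf:
  "map_pmf (map f) (replicate_pmf k p) = replicate_pmf k (map_pmf f p)"
proof (induction k)
  case (Suc k)
  then show ?case
    by (simp add: map_bind_pmf bind_map_pmf map_pmf_def[symmetric] pmf.map_comp o_def
        flip: Suc.IH)
qed simp

lemma map_pmf_eq_bernoulli_pmf:
  "map_pmf P p = bernoulli_pmf (measure_pmf.prob p {x. P x})"
proof (rule pmf_eqI)
  fix b
  have "pmf (map_pmf P p) False = 1 - measure_pmf.prob p {x. P x}"
    using measure_pmf.prob_compl[of "{x. P x}" p]
    by (simp add: pmf_map vimage_def Compl_eq_Diff_UNIV[symmetric] Compl_eq)
  then show "pmf (map_pmf P p) b = pmf (bernoulli_pmf (measure_pmf.prob p {x. P x})) b"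
    by (cases b) (simp_all add: pmf_map vimage_def)
qed

lemma map_pmf_count_replicate_pmf:
  "map_pmf (\<lambda>xs. length (filter P xs)) (replicate_pmf k p)
     = binomial_pmf k (measure_pmf.prob p {x. P x})"
proof -
  have "map_pmf (\<lambda>xs. length (filter P xs)) (replicate_pmf k p)
      = map_pmf (length \<circ> filter id) (map_pmf (map P) (replicate_pmf k p))"
    by (simp add: pmf.map_comp o_def filter_map)
  also have "\<dots> = binomial_pmf k (measure_pmf.prob p {x. P x})"
    by (simp add: map_pmf_map_replicate_pmf map_pmf_eq_bernoulli_pmf binomial_pmf_altdef)
  finally show ?thesis .
qed

lemma prob_replicate_pmf_count_le:
  assumes "k > 0" and "t \<ge> 0"
  shows "measure_pmf.prob (replicate_pmf k p)
           {xs. real (length (filter P xs)) \<le> real k * measure_pmf.prob p {x. P x} - t}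
         \<le> exp (-2 * t\<^sup>2 / real k)"
proof -
  interpret binomial_distribution k "measure_pmf.prob p {x. P x}"
    by unfold_locales auto
  show ?thesis
    using prob_le[OF assms] by (simp flip: map_pmf_count_replicate_pmf add: vimage_def)
qed

lemma prob_replicate_pmf_count_ge:
  assumes "k > 0" and "t \<ge> 0"
  shows "measure_pmf.prob (replicate_pmf k p)
           {xs. real (length (filter P xs)) \<ge> real k * measure_pmf.prob p {x. P x} + t}
         \<le> exp (-2 * t\<^sup>2 / real k)"
proof -
  interpret binomial_distribution k "measure_pmf.prob p {x. P x}"
    by unfold_locales auto
  show ?thesis
    using prob_ge[OF assms] by (simp flip: map_pmf_count_replicate_pmf add: vimage_def)
qed

definition component_multiplicity :: "nat \<Rightarrow> (nat \<Rightarrow> 'b) \<Rightarrow> 'b \<Rightarrow> nat" where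
  "component_multiplicity n fs g = card {i. i < n \<and> fs i = g}"

definition count_deviation :: "nat \<Rightarrow> nat \<Rightarrow> (nat \<Rightarrow> 'b) \<Rightarrow> nat list \<Rightarrow> 'b \<Rightarrow> real" where
  "count_deviation n k fs xs g =
     real (count_list (map fs xs) g) - real k * real (component_multiplicity n fs g) / real n"

lemma prob_pmf_of_set_lessThan:
  "n > 0 \<Longrightarrow>
     measure_pmf.prob (pmf_of_set {..<n}) {i. P i} = real (card {i. i < n \<and> P i}) / real n"
  by (simp add: measure_pmf_of_set lessThan_empty_iff Int_def)

lemma count_list_map_eq_length_filter:
  "count_list (map f xs) y = length (filter (\<lambda>x. f x = y) xs)"
  by (simp add: count_list_eq_length_filter filter_map o_def eq_commute)

lemma count_deviation_eq:
  assumes "n > 0"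
  shows "count_deviation n k fs xs g = real (length (filter (\<lambda>i. fs i = g) xs))
           - real k * measure_pmf.prob (pmf_of_set {..<n}) {i. fs i = g}"
  using assms by (simp add: count_deviation_def component_multiplicity_def prob_pmf_of_set_lessThan
      count_list_map_eq_length_filter)

lemma binomial_tail_exponent_eq:
  "k > 0 \<Longrightarrow> -2 * (real k / (2 * real n))\<^sup>2 / real k = - real k / (2 * (real n)\<^sup>2)"
  by (simp add: power2_eq_square)

lemma prob_count_deviation_le:
  assumes "n > 0" and "k > 0"
  shows "measure_pmf.prob (replicate_pmf k (pmf_of_set {..<n}))
           {xs. count_deviation n k fs xs g \<le> - real k / (2 * real n)}
         \<le> exp (- real k / (2 * (real n)\<^sup>2))"
  using prob_replicate_pmf_count_le[OF assms(2), of "real k / (2 * real n)" "pmf_of_set {..<n}"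
      "\<lambda>i. fs i = g", unfolded binomial_tail_exponent_eq[OF assms(2)]]
  by (simp add: count_deviation_eq[OF assms(1)] algebra_simps)

lemma prob_count_deviation_gt:
  assumes "n > 0" and "k > 0"
  shows "measure_pmf.prob (replicate_pmf k (pmf_of_set {..<n}))
           {xs. count_deviation n k fs xs g > real k / (2 * real n)}
         \<le> exp (- real k / (2 * (real n)\<^sup>2))"
proof -
  have "measure_pmf.prob (replicate_pmf k (pmf_of_set {..<n}))
           {xs. count_deviation n k fs xs g > real k / (2 * real n)}
      \<le> measure_pmf.prob (replicate_pmf k (pmf_of_set {..<n}))
           {xs. count_deviation n k fs xs g \<ge> real k / (2 * real n)}"
    by (intro measure_pmf.finite_measure_mono) auto
  also have "\<dots> \<le> exp (- real k / (2 * (real n)\<^sup>2))"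
    using prob_replicate_pmf_count_ge[OF assms(2), of "real k / (2 * real n)" "pmf_of_set {..<n}"
        "\<lambda>i. fs i = g", unfolded binomial_tail_exponent_eq[OF assms(2)]]
    by (simp add: count_deviation_eq[OF assms(1)] algebra_simps)
  finally show ?thesis .
qed

text \<open>If all n components have been observed, they are pairwise distinct, so each has
  multiplicity 1.\<close>

definition multiplicity_estimate :: "nat \<Rightarrow> nat \<Rightarrow> 'b list \<Rightarrow> 'b \<Rightarrow> real" where
  "multiplicity_estimate n k L g =
     (if card (set L) = n then 1
      else of_int \<lceil>real n * real (count_list L g) / real k - 1 / 2\<rceil>)"

definition estimated_objective :: "nat \<Rightarrow> nat \<Rightarrow> ('a \<Rightarrow> real) list \<Rightarrow> 'a \<Rightarrow> real" where
  "estimated_objective n k L w =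
     (1 / real n) * (\<Sum>g\<in>set L. multiplicity_estimate n k L g * g w)"

lemma ceiling_rescaled_eq:
  fixes a d :: real and m :: int
  assumes "a > 0" and "- a / 2 < d" and "d \<le> a / 2"
  shows "\<lceil>(a * m + d) / a - 1 / 2\<rceil> = m"
proof (rule ceiling_unique)
  have "(a * m + d) / a = m + d / a"
    using assms(1) by (simp add: field_simps)
  moreover have "- 1 / 2 < d / a" and "d / a \<le> 1 / 2"
    using assms by (simp_all add: field_simps)
  ultimately show "of_int m - 1 < (a * m + d) / a - 1 / 2" and "(a * m + d) / a - 1 / 2 \<le> of_int m"
    by simp_all
qed

lemma sum_lessThan_eq_sum_component_multiplicity:
  "(\<Sum>i<n. h (fs i)) = (\<Sum>g\<in>fs ` {..<n}. of_nat (component_multiplicity n fs g) * h g)"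
proof -
  have "(\<Sum>i<n. h (fs i)) = (\<Sum>g\<in>fs ` {..<n}. \<Sum>i\<in>{i\<in>{..<n}. fs i = g}. h (fs i))"
    by (rule sum.image_gen) simp
  also have "\<dots> = (\<Sum>g\<in>fs ` {..<n}. of_nat (component_multiplicity n fs g) * h g)"
    by (intro sum.cong) (simp_all add: component_multiplicity_def conj_commute)
  finally show ?thesis .
qed

lemma component_multiplicity_pos: "g \<in> fs ` {..<n} \<Longrightarrow> component_multiplicity n fs g > 0"
  by (auto simp: component_multiplicity_def card_gt_0_iff)

lemma component_multiplicity_eq_1_if_inj:
  "inj_on fs {..<n} \<Longrightarrow> g \<in> fs ` {..<n} \<Longrightarrow> component_multiplicity n fs g = 1"
  unfolding component_multiplicity_def by (auto simp: inj_on_def card_1_singleton_iff)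

lemma multiplicity_estimate_eq:
  assumes n: "n > 0" and k: "k > 0" and set_eq: "set (map fs xs) = fs ` {..<n}"
    and g: "g \<in> fs ` {..<n}"
    and lower: "- real k / (2 * real n) < count_deviation n k fs xs g"
    and upper: "card (fs ` {..<n}) < n \<Longrightarrow> count_deviation n k fs xs g \<le> real k / (2 * real n)"
  shows "multiplicity_estimate n k (map fs xs) g = real (component_multiplicity n fs g)"
proof (cases "card (fs ` {..<n}) = n")
  case True
  then have "inj_on fs {..<n}"
    by (simp add: eq_card_imp_inj_on)
  then show ?thesis
    using True g unfolding multiplicity_estimate_def set_eq
    by (simp add: component_multiplicity_eq_1_if_inj)
next
  case False
  then have "card (fs ` {..<n}) < n"
    using card_image_le[of "{..<n}" fs] by simp
  define a where "a = real k / real n"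
  define d where "d = count_deviation n k fs xs g"
  have "real n * real (count_list (map fs xs) g) / real k
      = (a * component_multiplicity n fs g + d) / a"
    using n k by (simp add: a_def d_def count_deviation_def field_simps)
  moreover have "\<lceil>(a * int (component_multiplicity n fs g) + d) / a - 1 / 2\<rceil>
      = int (component_multiplicity n fs g)"
    using lower upper[OF \<open>card (fs ` {..<n}) < n\<close>] n k
    by (intro ceiling_rescaled_eq) (simp_all add: a_def d_def)
  ultimately show ?thesis
    using False unfolding multiplicity_estimate_def set_eq by simp
qed

definition inaccurate_samples :: "nat \<Rightarrow> nat \<Rightarrow> (nat \<Rightarrow> 'b) \<Rightarrow> nat list set" where
  "inaccurate_samples n k fs =
     (\<Union>g\<in>fs ` {..<n}. {xs. count_deviation n k fs xs g \<le> - real k / (2 * real n)}) \<union>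
     (if card (fs ` {..<n}) < n
      then \<Union>g\<in>fs ` {..<n}. {xs. count_deviation n k fs xs g > real k / (2 * real n)} else {})"

lemma estimated_objective_eq:
  assumes n: "n > 0" and k: "k > 0" and xs: "set xs \<subseteq> {..<n}"
    and accurate: "xs \<notin> inaccurate_samples n k fs"
  shows "estimated_objective n k (map fs xs) w = (1 / real n) * (\<Sum>i<n. fs i w)"
proof -
  have lower: "- real k / (2 * real n) < count_deviation n k fs xs g" if "g \<in> fs ` {..<n}" for g
    using accurate that by (auto simp: inaccurate_samples_def not_le)
  have upper: "count_deviation n k fs xs g \<le> real k / (2 * real n)"
    if "card (fs ` {..<n}) < n" and "g \<in> fs ` {..<n}" for g
    using accurate that by (auto simp: inaccurate_samples_def not_less)
  have "g \<in> set (map fs xs)" if g: "g \<in> fs ` {..<n}" for g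
  proof -
    have "real k * 1 \<le> real k * real (component_multiplicity n fs g)"
      using component_multiplicity_pos[OF g] by (intro mult_left_mono) simp_all
    then have "real k / (2 * real n)
        \<le> real k * real (component_multiplicity n fs g) / real n - real k / (2 * real n)"
      using n by (simp add: field_simps)
    moreover have "real (count_list (map fs xs) g)
        = count_deviation n k fs xs g + real k * real (component_multiplicity n fs g) / real n"
      by (simp add: count_deviation_def)
    moreover have "real k / (2 * real n) > 0"
      using k n by simp
    ultimately have "count_list (map fs xs) g > 0"
      using lower[OF g] by linarith
    then show ?thesis
      by (metis count_notin less_irrefl)
  qed
  then have set_eq: "set (map fs xs) = fs ` {..<n}"
    using xs by auto
  show ?thesis
    unfolding estimated_objective_def set_eq sum_lessThan_eq_sum_component_multiplicity[of "\<lambda>g. g w"]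
    using multiplicity_estimate_eq[OF n k set_eq _ lower upper] by simp
qed

lemma prob_UN_le_card_mult:
  assumes "finite G" and "\<And>g. g \<in> G \<Longrightarrow> measure_pmf.prob p (A g) \<le> e"
  shows "measure_pmf.prob p (\<Union>g\<in>G. A g) \<le> real (card G) * e"
proof -
  have "measure_pmf.prob p (\<Union>g\<in>G. A g) \<le> (\<Sum>g\<in>G. measure_pmf.prob p (A g))"
    by (rule measure_pmf.finite_measure_subadditive_finite[OF assms(1)]) auto
  also have "\<dots> \<le> real (card G) * e"
    using assms(2) by (rule sum_bounded_above)
  finally show ?thesis .
qed

lemma prob_inaccurate_samples_le:
  assumes n: "n > 0" and k: "k > 0"
  shows "measure_pmf.prob (replicate_pmf k (pmf_of_set {..<n})) (inaccurate_samples n k fs)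
         \<le> (2 * real n - 1) * exp (- real k / (2 * (real n)\<^sup>2))"
proof -
  define I where "I = replicate_pmf k (pmf_of_set {..<n})"
  define e where "e = exp (- real k / (2 * (real n)\<^sup>2))"
  define m where "m = card (fs ` {..<n})"
  have m: "m \<le> n"
    unfolding m_def using card_image_le[of "{..<n}" fs] by simp
  have under: "measure_pmf.prob I
      (\<Union>g\<in>fs ` {..<n}. {xs. count_deviation n k fs xs g \<le> - real k / (2 * real n)}) \<le> m * e"
    unfolding I_def e_def m_def using prob_count_deviation_le[OF n k]
    by (intro prob_UN_le_card_mult) simp_all
  have over: "measure_pmf.prob I
      (\<Union>g\<in>fs ` {..<n}. {xs. count_deviation n k fs xs g > real k / (2 * real n)}) \<le> m * e"
    unfolding I_def e_def m_def using prob_count_deviation_gt[OF n k]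
    by (intro prob_UN_le_card_mult) simp_all
  have "measure_pmf.prob I (inaccurate_samples n k fs) \<le> m * e + (if m < n then m * e else 0)"
  proof (cases "m < n")
    case True
    then have "measure_pmf.prob I (inaccurate_samples n k fs)
      \<le> measure_pmf.prob I
            (\<Union>g\<in>fs ` {..<n}. {xs. count_deviation n k fs xs g \<le> - real k / (2 * real n)})
        + measure_pmf.prob I
            (\<Union>g\<in>fs ` {..<n}. {xs. count_deviation n k fs xs g > real k / (2 * real n)})"
      unfolding inaccurate_samples_def m_def[symmetric] by (simp add: measure_Un_le)
    moreover have "(if m < n then real m * e else 0) = real m * e"
      using True by simp
    ultimately show ?thesis
      using under over by linarith
  qed (use under in \<open>simp add: inaccurate_samples_def m_def[symmetric]\<close>)
  also have "\<dots> \<le> (2 * real n - 1) * e"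
    using m n by (cases "m < n") (auto intro!: mult_right_mono simp: e_def)
  finally show ?thesis
    unfolding I_def e_def .
qed

definition near_minimizer :: "real \<Rightarrow> ('a \<Rightarrow> real) \<Rightarrow> 'a" where
  "near_minimizer \<epsilon> G = (SOME w. G w - (INF v. G v) \<le> \<epsilon>)"

lemma near_minimizer:
  assumes "bdd_below (range G)" and "\<epsilon> > 0"
  shows "G (near_minimizer \<epsilon> G) - (INF v. G v) \<le> \<epsilon>"
proof -
  obtain w where "G w < (INF v. G v) + \<epsilon>"
    using cInf_less_iff[of "range G" "(INF v. G v) + \<epsilon>"] assms by auto
  then have "\<exists>w. G w - (INF v. G v) \<le> \<epsilon>"
    by (intro exI[of _ w]) simp
  then show ?thesis
    unfolding near_minimizer_def by (rule someI_ex)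
qed

definition finite_sum_estimator :: "nat \<Rightarrow> nat \<Rightarrow> real \<Rightarrow> 'd algorithm" where
  "finite_sum_estimator n k \<epsilon> L = return_pmf (near_minimizer \<epsilon> (estimated_objective n k L))"

lemma output_dist_return_pmf:
  "output_dist n k (\<lambda>L. return_pmf (\<phi> L)) fs
     = map_pmf (\<lambda>xs. \<phi> (map fs xs)) (replicate_pmf k (pmf_of_set {..<n}))"
  by (simp add: output_dist_def oracle_answers_def iid_list_eq_replicate_pmf map_pmf_def
      bind_assoc_pmf bind_return_pmf)

lemma fail_prob_finite_sum_estimator_le:
  assumes n: "n > 0" and k: "k > 0" and \<epsilon>: "\<epsilon> > 0" and fs: "fs \<in> Sigma_class n"
  shows "fail_prob n k (finite_sum_estimator n k \<epsilon>) \<epsilon> fs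
         \<le> (2 * real n - 1) * exp (- real k / (2 * (real n)\<^sup>2))"
proof -
  define I where "I = replicate_pmf k (pmf_of_set {..<n})"
  define F where "F = finite_sum_obj n fs"
  define Fail where
    "Fail = {xs. F (near_minimizer \<epsilon> (estimated_objective n k (map fs xs))) - (INF v. F v) > \<epsilon>}"
  have "Fail \<inter> set_pmf I \<subseteq> inaccurate_samples n k fs"
  proof (intro subsetI, rule ccontr)
    fix xs assume xs: "xs \<in> Fail \<inter> set_pmf I" and "xs \<notin> inaccurate_samples n k fs"
    moreover have "set xs \<subseteq> {..<n}"
      using xs n by (auto simp: I_def set_replicate_pmf lessThan_empty_iff)
    ultimately have "estimated_objective n k (map fs xs) = F"
      using estimated_objective_eq[OF n k] by (auto simp: F_def finite_sum_obj_def fun_eq_iff)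
    moreover have "bdd_below (range F)"
      using fs by (simp add: Sigma_class_def F_def)
    ultimately show False
      using near_minimizer[OF _ \<epsilon>, of F] xs by (simp add: Fail_def)
  qed
  then have "measure_pmf.prob I Fail \<le> measure_pmf.prob I (inaccurate_samples n k fs)"
    by (subst measure_Int_set_pmf[symmetric]) (rule measure_pmf.finite_measure_mono, simp_all)
  also have "\<dots> \<le> (2 * real n - 1) * exp (- real k / (2 * (real n)\<^sup>2))"
    unfolding I_def by (rule prob_inaccurate_samples_le[OF n k])
  finally show ?thesis
    unfolding fail_prob_def finite_sum_estimator_def[abs_def] output_dist_return_pmf
    by (simp add: I_def Fail_def F_def vimage_def)
qed

lemma Sigma_class_nonempty: "Sigma_class n \<noteq> {}"
proof -
  have "(\<lambda>i\<in>{..<n}. \<lambda>w. 0) \<in> Sigma_class n"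
    by (simp add: Sigma_class_def finite_sum_obj_def)
  then show ?thesis
    by blast
qed

lemma exp_half_inverse_square_le:
  fixes N :: real
  assumes "N \<ge> 1"
  shows "(2 * N - 1) * exp (1 / (2 * N\<^sup>2)) \<le> 2 * N"
proof -
  have "1 / (2 * N\<^sup>2) \<le> 1 / (2 * N)"
    using assms by (simp add: field_simps power2_eq_square)
  then have "(2 * N - 1) * exp (1 / (2 * N\<^sup>2)) \<le> (2 * N - 1) * exp (1 / (2 * N))"
    using assms by (intro mult_left_mono) simp_all
  also have "\<dots> = 2 * N * ((1 - 1 / (2 * N)) * exp (1 / (2 * N)))"
    using assms by (simp add: field_simps)
  also have "\<dots> \<le> 2 * N * (exp (- 1 / (2 * N)) * exp (1 / (2 * N)))"
    using assms exp_ge_add_one_self[of "- 1 / (2 * N)"]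
    by (intro mult_left_mono mult_right_mono) simp_all
  also have "\<dots> = 2 * N"
    by (simp flip: exp_add)
  finally show ?thesis .
qed

lemma sample_size_bound:
  fixes \<delta> :: real
  assumes n: "n > 0" and \<delta>: "0 < \<delta>"
  defines "B \<equiv> 2 * (real n)\<^sup>2 * ln (2 * real n / \<delta>)"
  shows "(2 * real n - 1) * exp (- real (nat \<lfloor>B\<rfloor>) / (2 * (real n)\<^sup>2)) < \<delta>"
proof -
  define N where "N = real n"
  have N: "N \<ge> 1"
    using n by (simp add: N_def)
  \<comment> \<open>Rounding B down costs a factor exp (1/(2N^2)), absorbed by 2N - 1 < 2N.\<close>
  have "- real (nat \<lfloor>B\<rfloor>) / (2 * N\<^sup>2) < - (B - 1) / (2 * N\<^sup>2)"
    using N by (intro divide_strict_right_mono) (linarith, simp)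
  also have "\<dots> = 1 / (2 * N\<^sup>2) - ln (2 * N / \<delta>)"
    using N by (simp add: B_def N_def field_simps)
  finally have "exp (- real (nat \<lfloor>B\<rfloor>) / (2 * N\<^sup>2)) < exp (1 / (2 * N\<^sup>2) - ln (2 * N / \<delta>))"
    by simp
  also have "\<dots> = \<delta> / (2 * N) * exp (1 / (2 * N\<^sup>2))"
    using N \<delta> by (simp add: exp_diff)
  finally have "(2 * N - 1) * exp (- real (nat \<lfloor>B\<rfloor>) / (2 * N\<^sup>2))
      < (2 * N - 1) * (\<delta> / (2 * N) * exp (1 / (2 * N\<^sup>2)))"
    using N by (intro mult_strict_left_mono) simp_all
  also have "\<dots> = \<delta> / (2 * N) * ((2 * N - 1) * exp (1 / (2 * N\<^sup>2)))"
    by (simp only: ac_simps)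
  also have "\<dots> \<le> \<delta> / (2 * N) * (2 * N)"
    using N \<delta> by (intro mult_left_mono exp_half_inverse_square_le) simp_all
  also have "\<dots> = \<delta>"
    using N by simp
  finally show ?thesis
    unfolding N_def .
qed

theorem theorem2:
  fixes n :: nat and \<epsilon> \<delta> :: real
  assumes "n \<ge> 1" and "\<epsilon> > 0" and "0 < \<delta>" and "\<delta> < 1"
  shows "minimax_complexity TYPE('d::finite) n \<epsilon> \<delta>
           \<le> ereal (2 * (real n)^2 * ln (2 * real n / \<delta>))"
proof -
  define B where "B = 2 * (real n)^2 * ln (2 * real n / \<delta>)"
  define k where "k = nat \<lfloor>B\<rfloor>"
  have n: "n > 0"
    using assms(1) by simp
  have k_bound: "(2 * real n - 1) * exp (- real k / (2 * (real n)\<^sup>2)) < \<delta>"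
    using sample_size_bound[OF n assms(3)] by (simp add: k_def B_def)
  then have "k > 0"
    using assms(1,4) by (cases "k = 0") simp_all
  then have "(SUP fs \<in> (Sigma_class n :: (nat \<Rightarrow> real ^ 'd \<Rightarrow> real) set).
                 fail_prob n k (finite_sum_estimator n k \<epsilon>) \<epsilon> fs) < \<delta>"
    using Sigma_class_nonempty fail_prob_finite_sum_estimator_le[OF n _ assms(2)]
    by (intro le_less_trans[OF cSUP_least k_bound]) simp_all
  then have "minimax_complexity TYPE('d) n \<epsilon> \<delta> \<le> ereal (real k)"
    unfolding minimax_complexity_def by (intro Inf_lower) blast
  also have "\<dots> \<le> ereal B"
    using \<open>k > 0\<close> by (simp add: k_def)
  finally show ?thesis
    unfolding B_def .
qed

end
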